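(* Let $f\colon\mathbb{R}^2\to\mathbb{R}^3$ be a regular smooth surface parametrization without parabolic and umbilic points, oriented by a smooth unit normal field $n$, with principal curvatures $\kappa_1\neq\kappa_2$ (both nonzero) with respect to $n$. Let $s$ be an attached tangent sphere congruence of $f$ with signed radius function $r$ (definitions in the context). Let $(t_1,t_2,n)$ be an orthonormal principal frame at a point $f(u,v)$, $t_i$ being the principal direction of $\kappa_i$. Then two non-parallel tangent vectors $\bar a=\bar a_1t_1+\bar a_2t_2$ and $\bar b=\bar b_1t_1+\bar b_2t_2$ at $f(u,v)$ are L-conjugate with respect to $s$ if and only if $$(\kappa_2^{-1}-r)\,\bar a_1\bar b_1+(\kappa_1^{-1}-r)\,\bar a_2\bar b_2=0,$$ where $r$ and $\kappa_1,\kappa_2$ are evaluated at $(u,v)$.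
   Context: $\mathbb{R}^{3,1}$ is $\mathbb{R}^4$ with inner product $\langle\langle X,Y\rangle\rangle=X_1Y_1+X_2Y_2+X_3Y_3-X_4Y_4$. Principal curvatures are the eigenvalues of the shape operator $-dn$ (so in a principal parametrization $n_u=-\kappa_1 f_u$, $n_v=-\kappa_2f_v$). Two tangent vectors $a,\bar a$ are conjugate (in the ordinary sense) if $\mathrm{II}(a,\bar a)=0$ for the second fundamental form with respect to $n$; in a principal frame this reads $\kappa_1a_1\bar a_1+\kappa_2a_2\bar a_2=0$. An oriented sphere is a pair $(c,\rho)$ with center $c\in\mathbb{R}^3$ and signed radius $\rho\in\mathbb{R}$ (radius zero allowed). The oriented tangent plane $p(u,v)$ at $f(u,v)$ is the plane through $f(u,v)$ with unit normal $n(u,v)$; it is written $\langle n,x\rangle+h=0$ with $h=-\langle n,f\rangle$. An attached tangent sphere congruence is a map assigning to each $(u,v)$ an oriented sphere $s(u,v)$ with signed radius $r(u,v)$ and center $f(u,v)+r(u,v)n(u,v)$ (i.e., in oriented contact with $p(u,v)$ at $f(u,v)$) such that its Minkowski lift $S(u,v):=(f+rn,\,r)\in\mathbb{R}^{3,1}$ is a regular smooth net ($S_u\not\parallel S_v$). The Minkowski lift of $p(u,v)$ is the isotropic hyperplane $P(u,v)=\{(x,x_4): x_4=\langle n,x\rangle+h\}$, with normal $N=(n,1)$. For a regular net $S$ with attached hyperplanes $P$, two non-parallel tangent vectors $T_1,T_2$ of $S$ are L-conjugate with respect to $P$ if there is a diffeomorphism $D$ of $\mathbb{R}^2$ such that for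 $\bar S=S\circ D,\bar P=P\circ D$, at the relevant parameter, $\bar S_u\parallel T_1$, $\bar S_v\parallel T_2$ and $\bar S_u,\bar S_v,\bar S_{uv}$ are parallel to $\bar P$. Two non-parallel tangent vectors $a,b$ of $f$ at $f(u,v)$ are L-conjugate with respect to $s$ if there is a diffeomorphism $D$ of $\mathbb{R}^2$ such that, with $\bar f=f\circ D$ and $\bar S,\bar P$ the Minkowski lifts of $s\circ D,p\circ D$, at the relevant parameter $\bar f_u$ is conjugate to $a$, $\bar f_v$ is conjugate to $b$, and $\bar S_u$ is L-conjugate to $\bar S_v$ with respect to $\bar P$. *)

theory Defs
  imports "HOL-Analysis.Analysis"
begin

text \<open>Parameters (u,v) range over real \<times> real; the surface lives in real^3;
  Minkowski space R^{3,1} is modelled as real^3 \<times> real, (x, x4).\<close>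

type_synonym param = "real \<times> real"
type_synonym mink = "(real^3) \<times> real"

fun Ck :: "nat \<Rightarrow> ('a::euclidean_space \<Rightarrow> 'b::euclidean_space) \<Rightarrow> bool" where
  "Ck 0 F = continuous_on UNIV F"
| "Ck (Suc k) F = (\<exists>F'. (\<forall>x. (F has_derivative F' x) (at x)) \<and> (\<forall>v. Ck k (\<lambda>x. F' x v)))"

definition smooth :: "('a::euclidean_space \<Rightarrow> 'b::euclidean_space) \<Rightarrow> bool" where
  "smooth F \<longleftrightarrow> (\<forall>k. Ck k F)"

definition diffeo :: "(param \<Rightarrow> param) \<Rightarrow> bool" where
  "diffeo D \<longleftrightarrow> bij D \<and> smooth D \<and> smooth (inv D)"

definition dF :: "('a::euclidean_space \<Rightarrow> 'b::euclidean_space) \<Rightarrow> 'a \<Rightarrow> 'a \<Rightarrow> 'b" where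
  "dF F p = frechet_derivative F (at p)"

definition pu :: "(param \<Rightarrow> 'b::euclidean_space) \<Rightarrow> param \<Rightarrow> 'b" where
  "pu F p = dF F p (1, 0)"

definition pv :: "(param \<Rightarrow> 'b::euclidean_space) \<Rightarrow> param \<Rightarrow> 'b" where
  "pv F p = dF F p (0, 1)"

definition puv :: "(param \<Rightarrow> 'b::euclidean_space) \<Rightarrow> param \<Rightarrow> 'b" where
  "puv F p = pv (pu F) p"

definition regular_net :: "(param \<Rightarrow> 'b::euclidean_space) \<Rightarrow> bool" where
  "regular_net F \<longleftrightarrow> (\<forall>p a b. a *\<^sub>R pu F p + b *\<^sub>R pv F p = 0 \<longrightarrow> a = 0 \<and> b = 0)"

definition non_parallel :: "'b::real_vector \<Rightarrow> 'b \<Rightarrow> bool" where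
  "non_parallel x y \<longleftrightarrow> (\<forall>a b. a *\<^sub>R x + b *\<^sub>R y = 0 \<longrightarrow> a = 0 \<and> b = 0)"

definition vec_parallel :: "'b::real_vector \<Rightarrow> 'b \<Rightarrow> bool" where
  "vec_parallel x y \<longleftrightarrow> x \<noteq> 0 \<and> y \<noteq> 0 \<and> (\<exists>c. x = c *\<^sub>R y)"

definition parallel_to :: "'b::real_vector \<Rightarrow> 'b set \<Rightarrow> bool" where
  "parallel_to X H \<longleftrightarrow> (\<forall>Y\<in>H. Y + X \<in> H)"

definition unit_normal_field :: "(param \<Rightarrow> real^3) \<Rightarrow> (param \<Rightarrow> real^3) \<Rightarrow> bool" where
  "unit_normal_field f n \<longleftrightarrow> (\<forall>p. norm (n p) = 1 \<and> (\<forall>\<xi>. n p \<bullet> dF f p \<xi> = 0))"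

text \<open>Umbilic point: shape operator -dn is a multiple of the identity;
  parabolic point: shape operator is singular (Gaussian curvature zero).\<close>
definition umbilic :: "(param \<Rightarrow> real^3) \<Rightarrow> (param \<Rightarrow> real^3) \<Rightarrow> param \<Rightarrow> bool" where
  "umbilic f n p \<longleftrightarrow> (\<exists>k. \<forall>\<xi>. dF n p \<xi> = - k *\<^sub>R dF f p \<xi>)"

definition parabolic :: "(param \<Rightarrow> real^3) \<Rightarrow> (param \<Rightarrow> real^3) \<Rightarrow> param \<Rightarrow> bool" where
  "parabolic f n p \<longleftrightarrow> (\<exists>\<xi>. \<xi> \<noteq> 0 \<and> dF n p \<xi> = 0)"

definition principal_dir :: "(param \<Rightarrow> real^3) \<Rightarrow> (param \<Rightarrow> real^3) \<Rightarrow> param \<Rightarrow> real^3 \<Rightarrow> real \<Rightarrow> bool" where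
  "principal_dir f n p t k \<longleftrightarrow> (\<exists>\<xi>. dF f p \<xi> = t \<and> dF n p \<xi> = - k *\<^sub>R t)"

text \<open>Ordinary conjugacy of tangent vectors X, Y at f(p): II(X,Y) = 0,
  II(df \<xi>, df \<eta>) = - dn(\<xi>) . df(\<eta>).\<close>
definition conjugate :: "(param \<Rightarrow> real^3) \<Rightarrow> (param \<Rightarrow> real^3) \<Rightarrow> param \<Rightarrow> real^3 \<Rightarrow> real^3 \<Rightarrow> bool" where
  "conjugate f n p X Y \<longleftrightarrow>
     (\<exists>\<xi> \<eta>. X = dF f p \<xi> \<and> Y = dF f p \<eta> \<and> - (dF n p \<xi> \<bullet> dF f p \<eta>) = 0)"

definition sphere_lift :: "(param \<Rightarrow> real^3) \<Rightarrow> (param \<Rightarrow> real^3) \<Rightarrow> (param \<Rightarrow> real) \<Rightarrow> param \<Rightarrow> mink" where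
  "sphere_lift f n r p = (f p + r p *\<^sub>R n p, r p)"

text \<open>Minkowski lift of the oriented tangent plane <n,x> + h = 0, h = -<n,f>.\<close>
definition plane_lift :: "(param \<Rightarrow> real^3) \<Rightarrow> (param \<Rightarrow> real^3) \<Rightarrow> param \<Rightarrow> mink set" where
  "plane_lift f n p = {(x, x4). x4 = n p \<bullet> x + (- (n p \<bullet> f p))}"

definition L_conj_net :: "(param \<Rightarrow> mink) \<Rightarrow> (param \<Rightarrow> mink set) \<Rightarrow> param \<Rightarrow> mink \<Rightarrow> mink \<Rightarrow> bool" where
  "L_conj_net S P q T1 T2 \<longleftrightarrow>
     (\<exists>D q'. diffeo D \<and> D q' = q \<and>
        vec_parallel (pu (S \<circ> D) q') T1 \<and> vec_parallel (pv (S \<circ> D) q') T2 \<and>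
        parallel_to (pu (S \<circ> D) q') ((P \<circ> D) q') \<and>
        parallel_to (pv (S \<circ> D) q') ((P \<circ> D) q') \<and>
        parallel_to (puv (S \<circ> D) q') ((P \<circ> D) q'))"

definition L_conj :: "(param \<Rightarrow> real^3) \<Rightarrow> (param \<Rightarrow> real^3) \<Rightarrow> (param \<Rightarrow> real) \<Rightarrow> param \<Rightarrow> real^3 \<Rightarrow> real^3 \<Rightarrow> bool" where
  "L_conj f n r p a b \<longleftrightarrow>
     (\<exists>D q. diffeo D \<and> D q = p \<and>
        conjugate f n p (pu (f \<circ> D) q) a \<and>
        conjugate f n p (pv (f \<circ> D) q) b \<and>
        L_conj_net (sphere_lift f n r \<circ> D) (plane_lift f n \<circ> D) q
           (pu (sphere_lift f n r \<circ> D) q) (pv (sphere_lift f n r \<circ> D) q))"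

end

theory Submission
  imports Defs
begin

text \<open>
  Along any reparametrization \<open>E\<close>, the lifted net \<open>S = (f + r n, r)\<close> has \<open>S\<^sub>u\<close> and \<open>S\<^sub>v\<close>
  parallel to the isotropic plane lift \<open>P\<close> automatically, because \<open>n\<close> is a unit normal field.
  Differentiating this incidence once more shows that \<open>S\<^sub>u\<^sub>v\<close> is parallel to \<open>P\<close> exactly
  when \<open>(II - r III)(E\<^sub>v, E\<^sub>u) = 0\<close>, a condition on first derivatives of \<open>E\<close> only. Hence
  \<open>a\<close> and \<open>b\<close> are L-conjugate iff some pair of independent directions, conjugate to \<open>a\<close> and to
  \<open>b\<close> respectively, is conjugate for \<open>II - r III\<close>. In a principal frame \<open>II\<close> and \<open>III\<close> are
  diagonal with entries \<open>\<kappa>\<^sub>i\<close> and \<open>\<kappa>\<^sub>i\<^sup>2\<close>, the directions conjugate to \<open>(a\<^sub>1, a\<^sub>2)\<close> are the multiples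
  of \<open>(\<kappa>\<^sub>2 a\<^sub>2, -\<kappa>\<^sub>1 a\<^sub>1)\<close>, and \<open>II - r III\<close> evaluated on the two such directions for \<open>a\<close>
  and \<open>b\<close> is \<open>(\<kappa>\<^sub>1\<kappa>\<^sub>2)\<^sup>2 ((1/\<kappa>\<^sub>2 - r) a\<^sub>1 b\<^sub>1 + (1/\<kappa>\<^sub>1 - r) a\<^sub>2 b\<^sub>2)\<close>.
\<close>

definition twice_differentiable :: "('a::euclidean_space \<Rightarrow> 'b::euclidean_space) \<Rightarrow> bool" where
  "twice_differentiable F \<longleftrightarrow> (\<forall>x. F differentiable at x) \<and> (\<forall>v x. (\<lambda>y. dF F y v) differentiable at x)"

lemma smooth_imp_twice_differentiable:
  assumes "smooth F"
  shows "twice_differentiable F"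
proof -
  have "Ck (Suc (Suc 0)) F"
    using assms unfolding smooth_def by blast
  then obtain F' where F': "\<And>x. (F has_derivative F' x) (at x)"
    and C1: "\<And>v. Ck (Suc 0) (\<lambda>x. F' x v)"
    by auto
  have "dF F y = F' y" for y
    unfolding dF_def using F' frechet_derivative_at by metis
  moreover have "(\<lambda>y. F' y v) differentiable at x" for v x
    using C1[of v] by (auto simp: differentiable_def)
  moreover have "F differentiable at x" for x
    using F' unfolding differentiable_def by blast
  ultimately show ?thesis
    unfolding twice_differentiable_def by simp
qed

lemma twice_differentiable_has_derivative:
  "twice_differentiable F \<Longrightarrow> (F has_derivative dF F x) (at x)"
  unfolding twice_differentiable_def dF_def using frechet_derivative_works by blast

lemma twice_differentiable_linear_dF:
  "twice_differentiable F \<Longrightarrow> linear (dF F x)"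
  using twice_differentiable_has_derivative has_derivative_linear by blast

lemma dF_compose:
  assumes "twice_differentiable F" "twice_differentiable E"
  shows "dF (F \<circ> E) x = dF F (E x) \<circ> dF E x"
  using assms unfolding twice_differentiable_def dF_def by (simp add: frechet_derivative_compose)

lemma twice_differentiable_compose:
  assumes F: "twice_differentiable F" and E: "twice_differentiable E"
  shows "twice_differentiable (F \<circ> E)"
proof -
  have expand: "dF (F \<circ> E) y v = (\<Sum>b\<in>Basis. (dF E y v \<bullet> b) *\<^sub>R dF F (E y) b)" for y v
  proof -
    have "dF (F \<circ> E) y v = dF F (E y) (\<Sum>b\<in>Basis. (dF E y v \<bullet> b) *\<^sub>R b)"
      using dF_compose[OF F E] by (simp add: euclidean_representation)
    then show ?thesis
      using twice_differentiable_linear_dF[OF F] by (simp add: linear_sum linear_scale)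
  qed
  have "(\<lambda>y. dF E y v \<bullet> b) differentiable at x" for v b x
    using E unfolding twice_differentiable_def by (simp add: differentiable_inner)
  moreover have "(\<lambda>y. dF F (E y) b) differentiable at x" for b x
    using E F differentiable_compose[of "\<lambda>z. dF F z b" E]
    unfolding twice_differentiable_def by blast
  ultimately have "(\<lambda>y. dF (F \<circ> E) y v) differentiable at x" for v x
    unfolding expand by (intro differentiable_sum ballI differentiable_scaleR) auto
  moreover have "(F \<circ> E) differentiable at x" for x
    using E F unfolding twice_differentiable_def by (simp add: differentiable_chain_at)
  ultimately show ?thesis
    unfolding twice_differentiable_def by blast
qed

lemma pu_compose:
  assumes "twice_differentiable F" "twice_differentiable E"
  shows "pu (F \<circ> E) x = dF F (E x) (pu E x)"
  using dF_compose[OF assms] by (simp add: pu_def)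

lemma pv_compose:
  assumes "twice_differentiable F" "twice_differentiable E"
  shows "pv (F \<circ> E) x = dF F (E x) (pv E x)"
  using dF_compose[OF assms] by (simp add: pv_def)

lemma has_derivative_affine:
  fixes L :: "'a::euclidean_space \<Rightarrow> 'b::real_normed_vector"
  assumes "linear L"
  shows "((\<lambda>x. c + L x) has_derivative L) (at x)"
  using has_derivative_add[OF has_derivative_const linear_imp_has_derivative[OF assms]] by simp

lemma dF_affine:
  fixes L :: "'a::euclidean_space \<Rightarrow> 'b::euclidean_space"
  shows "linear L \<Longrightarrow> dF (\<lambda>x. c + L x) z = L"
  unfolding dF_def using has_derivative_affine frechet_derivative_at by metis

lemma Ck_const: "Ck k (\<lambda>x::'a::euclidean_space. c::'b::euclidean_space)"
proof (induction k arbitrary: c)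
  case 0
  then show ?case by simp
next
  case (Suc k)
  show ?case
    by (simp only: Ck.simps) (rule exI[of _ "\<lambda>x h. 0"], simp add: Suc)
qed

lemma smooth_affine:
  fixes L :: "'a::euclidean_space \<Rightarrow> 'b::euclidean_space"
  assumes "linear L"
  shows "smooth (\<lambda>x. c + L x)"
  unfolding smooth_def
proof
  fix k
  show "Ck k (\<lambda>x. c + L x)"
  proof (cases k)
    case 0
    then show ?thesis
      using assms by (simp add: continuous_on_add linear_continuous_on linear_conv_bounded_linear)
  next
    case (Suc m)
    then show ?thesis
      by (simp only: Ck.simps) (rule exI[of _ "\<lambda>x. L"], simp add: Ck_const has_derivative_affine[OF assms])
  qed
qed

definition lincomb :: "'a::real_vector \<Rightarrow> 'a \<Rightarrow> real \<times> real \<Rightarrow> 'a" where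
  "lincomb \<alpha> \<beta> z = fst z *\<^sub>R \<alpha> + snd z *\<^sub>R \<beta>"

lemma lincomb_unit_vectors [simp]: "lincomb \<alpha> \<beta> (1, 0) = \<alpha>" "lincomb \<alpha> \<beta> (0, 1) = \<beta>"
  by (simp_all add: lincomb_def)

lemma linear_lincomb: "linear (lincomb \<alpha> \<beta>)"
  by (rule linearI) (auto simp: lincomb_def algebra_simps)

lemma linear_lincomb_image: "linear L \<Longrightarrow> L (lincomb \<alpha> \<beta> z) = lincomb (L \<alpha>) (L \<beta>) z"
  by (simp add: lincomb_def linear_add linear_scale)

lemma linear_eq_lincomb:
  fixes L :: "real \<times> real \<Rightarrow> 'a::real_vector"
  assumes "linear L"
  shows "L z = lincomb (L (1, 0)) (L (0, 1)) z"
proof -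
  have "z = lincomb (1, 0) (0, 1) z"
    by (simp add: lincomb_def)
  then show ?thesis
    using linear_lincomb_image[OF assms] by metis
qed

lemma lincomb_inner_orthonormal:
  assumes "t1 \<bullet> t1 = 1" "t2 \<bullet> t2 = 1" "t1 \<bullet> t2 = 0"
  shows "lincomb t1 t2 u \<bullet> lincomb t1 t2 v = fst u * fst v + snd u * snd v"
  using assms by (simp add: lincomb_def inner_add_left inner_add_right inner_commute[of t2 t1])

lemma non_parallel_iff_lincomb: "non_parallel \<alpha> \<beta> \<longleftrightarrow> (\<forall>z. lincomb \<alpha> \<beta> z = 0 \<longrightarrow> z = 0)"
  by (auto simp: non_parallel_def lincomb_def prod_eq_iff)

lemma non_parallel_nonzero: "non_parallel \<alpha> \<beta> \<Longrightarrow> \<alpha> \<noteq> 0 \<and> \<beta> \<noteq> 0"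
  using non_parallel_def[of \<alpha> \<beta>] by (metis add.right_neutral add_0 scaleR_one scaleR_zero_left zero_neq_one)

lemma non_parallel_orthonormal:
  assumes "t1 \<bullet> t1 = 1" "t2 \<bullet> t2 = 1" "t1 \<bullet> t2 = 0"
  shows "non_parallel t1 t2"
  unfolding non_parallel_iff_lincomb
proof (intro allI impI)
  fix z :: "real \<times> real"
  assume "lincomb t1 t2 z = 0"
  then have "fst z * fst z + snd z * snd z = 0"
    using lincomb_inner_orthonormal[OF assms, of z z] by simp
  then show "z = 0"
    by (simp add: prod_eq_iff sum_squares_eq_zero_iff)
qed

lemma non_parallel_of_linear_image:
  assumes "linear L" "non_parallel (L \<alpha>) (L \<beta>)"
  shows "non_parallel \<alpha> \<beta>"
  using assms linear_lincomb_image[OF assms(1)] linear_0[OF assms(1)]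
  unfolding non_parallel_iff_lincomb by metis

lemma non_parallel_linear_image_iff:
  assumes "linear L" "inj L"
  shows "non_parallel (L \<alpha>) (L \<beta>) \<longleftrightarrow> non_parallel \<alpha> \<beta>"
proof -
  have "lincomb (L \<alpha>) (L \<beta>) z = 0 \<longleftrightarrow> L (lincomb \<alpha> \<beta> z) = L 0" for z
    using linear_lincomb_image[OF assms(1)] linear_0[OF assms(1)] by simp
  then have "lincomb (L \<alpha>) (L \<beta>) z = 0 \<longleftrightarrow> lincomb \<alpha> \<beta> z = 0" for z
    using assms(2) by (simp add: inj_eq)
  then show ?thesis
    unfolding non_parallel_iff_lincomb by simp
qed

lemma lincomb_linear_inverse:
  fixes \<alpha> \<beta> :: "real \<times> real"
  assumes "non_parallel \<alpha> \<beta>"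
  obtains M where "linear M" "\<And>z. M (lincomb \<alpha> \<beta> z) = z" "\<And>w. lincomb \<alpha> \<beta> (M w) = w"
proof -
  have "inj (lincomb \<alpha> \<beta>)"
    using assms linear_injective_0[OF linear_lincomb] non_parallel_iff_lincomb by blast
  then show ?thesis
    using linear_injective_isomorphism[OF linear_lincomb] that by blast
qed

lemma diffeo_affine:
  fixes p \<alpha> \<beta> :: "real \<times> real"
  assumes "non_parallel \<alpha> \<beta>"
  shows "diffeo (\<lambda>z. p + lincomb \<alpha> \<beta> z)"
proof -
  obtain M where M: "linear M" "\<And>z. M (lincomb \<alpha> \<beta> z) = z" "\<And>w. lincomb \<alpha> \<beta> (M w) = w"
    using lincomb_linear_inverse[OF assms] by blast
  define D where "D z = p + lincomb \<alpha> \<beta> z" for z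
  define G where "G w = - M p + M w" for w
  have GD: "G (D z) = z" for z
    using M by (simp add: D_def G_def linear_add)
  have DG: "D (G w) = w" for w
    using M by (simp add: D_def G_def linear_diff[OF linear_lincomb])
  have "inv D = G"
    using GD DG by (intro inv_equality)
  moreover have "bij D"
    using GD DG by (intro o_bij[of G]) auto
  moreover have "smooth D"
    unfolding D_def[abs_def] by (rule smooth_affine[OF linear_lincomb])
  moreover have "smooth G"
    unfolding G_def[abs_def] by (rule smooth_affine[OF M(1)])
  ultimately show ?thesis
    unfolding diffeo_def D_def[abs_def] by simp
qed

lemma diffeo_id: "diffeo id"
proof -
  have "non_parallel (1, 0) (0::real, 1::real)"
    by (simp add: non_parallel_def zero_prod_def)
  moreover have "(\<lambda>z. 0 + lincomb (1, 0) (0, 1) z) = id"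
    by (auto simp: lincomb_def)
  ultimately show ?thesis
    using diffeo_affine[of "(1, 0)" "(0, 1)" 0] by (simp add: id_def)
qed

lemma diffeo_imp_twice_differentiable: "diffeo D \<Longrightarrow> twice_differentiable D"
  unfolding diffeo_def by (simp add: smooth_imp_twice_differentiable)

lemma diffeo_dF_injective:
  assumes "diffeo D" "dF D q v = 0"
  shows "v = 0"
proof -
  have D: "twice_differentiable D" and G: "twice_differentiable (inv D)"
    using assms(1) smooth_imp_twice_differentiable unfolding diffeo_def by blast+
  have "inv D \<circ> D = id"
    using assms(1) bij_is_inj inv_o_cancel unfolding diffeo_def by blast
  moreover have "dF id q = id"
    by (simp add: dF_def)
  ultimately have "dF (inv D) (D q) \<circ> dF D q = id"
    using dF_compose[OF G D] by simp
  then have "v = dF (inv D) (D q) 0"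
    using assms(2) by (metis comp_apply id_apply)
  then show ?thesis
    using linear_0[OF twice_differentiable_linear_dF[OF G]] by simp
qed

lemma diffeo_non_parallel_pu_pv:
  assumes "diffeo D"
  shows "non_parallel (pu D q) (pv D q)"
proof -
  have "linear (dF D q)"
    by (rule twice_differentiable_linear_dF[OF diffeo_imp_twice_differentiable[OF assms]])
  then have "lincomb (pu D q) (pv D q) z = dF D q z" for z
    unfolding pu_def pv_def by (rule linear_eq_lincomb[symmetric])
  then show ?thesis
    using diffeo_dF_injective[OF assms] by (simp add: non_parallel_iff_lincomb)
qed

definition second_fundamental_form ::
    "(param \<Rightarrow> real^3) \<Rightarrow> (param \<Rightarrow> real^3) \<Rightarrow> param \<Rightarrow> param \<Rightarrow> param \<Rightarrow> real" where
  "second_fundamental_form f n y \<xi> \<eta> = - (dF n y \<xi> \<bullet> dF f y \<eta>)"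

definition third_fundamental_form :: "(param \<Rightarrow> real^3) \<Rightarrow> param \<Rightarrow> param \<Rightarrow> param \<Rightarrow> real" where
  "third_fundamental_form n y \<xi> \<eta> = dF n y \<xi> \<bullet> dF n y \<eta>"

lemma parallel_to_plane_lift_iff: "parallel_to X (plane_lift f n y) \<longleftrightarrow> snd X = n y \<bullet> fst X"
proof
  assume "parallel_to X (plane_lift f n y)"
  moreover have "(f y, 0) \<in> plane_lift f n y"
    unfolding plane_lift_def by simp
  ultimately have "(f y, 0) + X \<in> plane_lift f n y"
    unfolding parallel_to_def by blast
  then show "snd X = n y \<bullet> fst X"
    unfolding plane_lift_def by (cases X) (simp add: inner_add_right)
next
  assume "snd X = n y \<bullet> fst X"
  then show "parallel_to X (plane_lift f n y)"
    unfolding parallel_to_def plane_lift_def by (cases X) (auto simp: inner_add_right)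
qed

lemma has_derivative_incidence:
  fixes g :: "'a::real_normed_vector \<Rightarrow> 'v::real_inner \<times> real"
  assumes g: "(g has_derivative G) (at x)" and N: "(N has_derivative N') (at x)"
    and incident: "\<And>y. snd (g y) = N y \<bullet> fst (g y)"
  shows "snd (G h) = N x \<bullet> fst (G h) + N' h \<bullet> fst (g x)"
proof -
  have "((\<lambda>y. snd (g y) - N y \<bullet> fst (g y)) has_derivative
      (\<lambda>h. snd (G h) - (N x \<bullet> fst (G h) + N' h \<bullet> fst (g x)))) (at x)"
    by (intro has_derivative_diff has_derivative_snd has_derivative_fst has_derivative_inner g N)
  moreover have "((\<lambda>y. snd (g y) - N y \<bullet> fst (g y)) has_derivative (\<lambda>h. 0)) (at x)"
    using incident by simp
  ultimately have "(\<lambda>h. snd (G h) - (N x \<bullet> fst (G h) + N' h \<bullet> fst (g x))) = (\<lambda>h. 0)"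
    by (rule has_derivative_unique)
  from fun_cong[OF this, of h] show ?thesis
    by simp
qed

locale tangent_sphere_congruence =
  fixes f n :: "param \<Rightarrow> real^3" and r :: "param \<Rightarrow> real"
  assumes smooth_f: "smooth f" and smooth_n: "smooth n"
    and unit_normal: "unit_normal_field f n"
    and smooth_S: "smooth (sphere_lift f n r)"
    and regular_S: "regular_net (sphere_lift f n r)"
begin

abbreviation S :: "param \<Rightarrow> mink" where
  "S \<equiv> sphere_lift f n r"

lemma twice_differentiable_f: "twice_differentiable f"
  and twice_differentiable_n: "twice_differentiable n"
  and twice_differentiable_S: "twice_differentiable S"
  using smooth_f smooth_n smooth_S by (simp_all add: smooth_imp_twice_differentiable)

lemma linear_dF: "linear (dF f y)" "linear (dF n y)" "linear (dF S y)"
  using twice_differentiable_f twice_differentiable_n twice_differentiable_S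
  by (simp_all add: twice_differentiable_linear_dF)

lemma normal_inner_normal: "n y \<bullet> n y = 1"
  using unit_normal norm_eq_1 unfolding unit_normal_field_def by blast

lemma normal_orthogonal_dF_f: "n y \<bullet> dF f y w = 0"
  using unit_normal unfolding unit_normal_field_def by blast

lemma normal_orthogonal_dF_n: "n y \<bullet> dF n y w = 0"
proof -
  have "((\<lambda>y. n y \<bullet> n y) has_derivative (\<lambda>h. n y \<bullet> dF n y h + dF n y h \<bullet> n y)) (at y)"
    by (intro has_derivative_inner twice_differentiable_has_derivative twice_differentiable_n)
  moreover have "((\<lambda>y. n y \<bullet> n y) has_derivative (\<lambda>h. 0)) (at y)"
    by (simp add: normal_inner_normal)
  ultimately have "(\<lambda>h. n y \<bullet> dF n y h + dF n y h \<bullet> n y) = (\<lambda>h. 0)"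
    by (rule has_derivative_unique)
  from fun_cong[OF this, of w] show ?thesis
    by (simp add: inner_commute)
qed

lemma has_derivative_radius: "(r has_derivative (\<lambda>w. snd (dF S y w))) (at y)"
  using has_derivative_snd[OF twice_differentiable_has_derivative[OF twice_differentiable_S]]
  by (simp add: sphere_lift_def)

lemma dF_sphere_lift:
  "dF S y w = (dF f y w + dF r y w *\<^sub>R n y + r y *\<^sub>R dF n y w, dF r y w)"
proof -
  have "(r has_derivative dF r y) (at y)"
    using has_derivative_radius frechet_derivative_at unfolding dF_def by metis
  then have "((\<lambda>y. (f y + r y *\<^sub>R n y, r y)) has_derivative
      (\<lambda>w. (dF f y w + (r y *\<^sub>R dF n y w + dF r y w *\<^sub>R n y), dF r y w))) (at y)"
    by (intro has_derivative_Pair has_derivative_add has_derivative_scaleR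
        twice_differentiable_has_derivative[OF twice_differentiable_f]
        twice_differentiable_has_derivative[OF twice_differentiable_n])
  then have "dF S y = (\<lambda>w. (dF f y w + (r y *\<^sub>R dF n y w + dF r y w *\<^sub>R n y), dF r y w))"
    unfolding dF_def sphere_lift_def[abs_def] by (rule frechet_derivative_at[symmetric])
  then show ?thesis
    by (simp add: add_ac)
qed

lemma dF_sphere_lift_parallel: "parallel_to (dF S y w) (plane_lift f n y)"
  by (simp add: parallel_to_plane_lift_iff dF_sphere_lift inner_add_right
      normal_orthogonal_dF_f normal_orthogonal_dF_n normal_inner_normal)

lemma dF_sphere_lift_injective:
  assumes "dF S y v = 0"
  shows "v = 0"
proof -
  have "non_parallel (pu S y) (pv S y)"
    using regular_S unfolding regular_net_def non_parallel_def by blast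
  moreover have "lincomb (pu S y) (pv S y) v = dF S y v"
    unfolding pu_def pv_def by (rule linear_eq_lincomb[OF linear_dF(3), symmetric])
  ultimately show ?thesis
    using assms non_parallel_iff_lincomb by metis
qed

lemma fundamental_forms_scaleR:
  "second_fundamental_form f n y (a *\<^sub>R \<xi>) (b *\<^sub>R \<eta>) = a * b * second_fundamental_form f n y \<xi> \<eta>"
  "third_fundamental_form n y (a *\<^sub>R \<xi>) (b *\<^sub>R \<eta>) = a * b * third_fundamental_form n y \<xi> \<eta>"
  unfolding second_fundamental_form_def third_fundamental_form_def
  by (simp_all add: linear_scale[OF linear_dF(1)] linear_scale[OF linear_dF(2)])

lemma vec_parallel_dF_sphere_lift:
  assumes "vec_parallel (dF S y \<xi>') (dF S y \<xi>)"
  obtains k where "k \<noteq> 0" "\<xi>' = k *\<^sub>R \<xi>"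
proof -
  obtain k where k: "dF S y \<xi>' = k *\<^sub>R dF S y \<xi>" and nonzero: "dF S y \<xi>' \<noteq> 0"
    using assms unfolding vec_parallel_def by blast
  then have "dF S y (\<xi>' - k *\<^sub>R \<xi>) = 0"
    by (simp add: linear_diff[OF linear_dF(3)] linear_scale[OF linear_dF(3)])
  then have "\<xi>' - k *\<^sub>R \<xi> = 0"
    by (rule dF_sphere_lift_injective)
  moreover have "k \<noteq> 0"
    using k nonzero by auto
  ultimately show ?thesis
    using that by simp
qed

lemma puv_sphere_lift_parallel_iff:
  assumes E: "twice_differentiable E"
  shows "parallel_to (puv (S \<circ> E) x) (plane_lift f n (E x)) \<longleftrightarrow>
    second_fundamental_form f n (E x) (pv E x) (pu E x) =
      r (E x) * third_fundamental_form n (E x) (pv E x) (pu E x)"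
proof -
  define g where "g = pu (S \<circ> E)"
  have g_eq: "g y = dF S (E y) (pu E y)" for y
    unfolding g_def by (rule pu_compose[OF twice_differentiable_S E])
  have incident: "snd (g y) = (n \<circ> E) y \<bullet> fst (g y)" for y
    using dF_sphere_lift_parallel[of "E y"] unfolding parallel_to_plane_lift_iff g_eq by simp
  have "g differentiable at x"
    using twice_differentiable_compose[OF twice_differentiable_S E]
    unfolding g_def pu_def dF_def twice_differentiable_def by blast
  then have g': "(g has_derivative dF g x) (at x)"
    unfolding dF_def by (rule frechet_derivative_works[THEN iffD1])
  have n': "((n \<circ> E) has_derivative dF n (E x) \<circ> dF E x) (at x)"
    by (intro diff_chain_at twice_differentiable_has_derivative E twice_differentiable_n)
  have "snd (puv (S \<circ> E) x) =
      n (E x) \<bullet> fst (puv (S \<circ> E) x) + dF n (E x) (pv E x) \<bullet> fst (g x)"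
    using has_derivative_incidence[OF g' n' incident, of "(0, 1)"]
    unfolding puv_def pv_def g_def by simp
  moreover have "dF n (E x) (pv E x) \<bullet> fst (g x) =
      r (E x) * third_fundamental_form n (E x) (pv E x) (pu E x) -
      second_fundamental_form f n (E x) (pv E x) (pu E x)"
    using normal_orthogonal_dF_n[of "E x" "pv E x"]
    by (simp add: g_eq dF_sphere_lift second_fundamental_form_def third_fundamental_form_def
        inner_add_right inner_commute)
  ultimately show ?thesis
    unfolding parallel_to_plane_lift_iff by auto
qed

lemma L_conj_net_sphere_liftD:
  assumes D: "diffeo D"
    and net: "L_conj_net (S \<circ> D) (plane_lift f n \<circ> D) q (pu (S \<circ> D) q) (pv (S \<circ> D) q)"
  shows "second_fundamental_form f n (D q) (pv D q) (pu D q) =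
    r (D q) * third_fundamental_form n (D q) (pv D q) (pu D q)"
proof -
  obtain D' q' where D': "diffeo D'" "D' q' = q"
    and par_u: "vec_parallel (pu (S \<circ> D \<circ> D') q') (pu (S \<circ> D) q)"
    and par_v: "vec_parallel (pv (S \<circ> D \<circ> D') q') (pv (S \<circ> D) q)"
    and par_uv: "parallel_to (puv (S \<circ> D \<circ> D') q') ((plane_lift f n \<circ> D \<circ> D') q')"
    using net unfolding L_conj_net_def by blast
  define E where "E = D \<circ> D'"
  have D2: "twice_differentiable D" and E2: "twice_differentiable E"
    using D D' diffeo_imp_twice_differentiable twice_differentiable_compose
    unfolding E_def by blast+
  have Eq': "E q' = D q"
    using D' by (simp add: E_def)
  have SE: "S \<circ> D \<circ> D' = S \<circ> E"
    by (simp add: E_def o_assoc)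
  obtain k1 k2 where k: "k1 \<noteq> 0" "k2 \<noteq> 0"
    and pu_E: "pu E q' = k1 *\<^sub>R pu D q" and pv_E: "pv E q' = k2 *\<^sub>R pv D q"
    using par_u par_v vec_parallel_dF_sphere_lift
    unfolding SE pu_compose[OF twice_differentiable_S D2] pv_compose[OF twice_differentiable_S D2]
      pu_compose[OF twice_differentiable_S E2] pv_compose[OF twice_differentiable_S E2] Eq'
    by metis
  have "parallel_to (puv (S \<circ> E) q') (plane_lift f n (E q'))"
    using par_uv by (simp add: SE E_def)
  then have "second_fundamental_form f n (E q') (pv E q') (pu E q') =
      r (E q') * third_fundamental_form n (E q') (pv E q') (pu E q')"
    by (rule puv_sphere_lift_parallel_iff[OF E2, THEN iffD1])
  then show ?thesis
    using k by (simp add: Eq' pu_E pv_E fundamental_forms_scaleR)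
qed

lemma L_conj_net_sphere_liftI:
  assumes D: "diffeo D"
    and forms: "second_fundamental_form f n (D q) (pv D q) (pu D q) =
      r (D q) * third_fundamental_form n (D q) (pv D q) (pu D q)"
  shows "L_conj_net (S \<circ> D) (plane_lift f n \<circ> D) q (pu (S \<circ> D) q) (pv (S \<circ> D) q)"
proof -
  have D2: "twice_differentiable D"
    using D by (rule diffeo_imp_twice_differentiable)
  have SD: "pu (S \<circ> D) q = dF S (D q) (pu D q)" "pv (S \<circ> D) q = dF S (D q) (pv D q)"
    using pu_compose[OF twice_differentiable_S D2] pv_compose[OF twice_differentiable_S D2] by simp_all
  have "pu (S \<circ> D) q \<noteq> 0" "pv (S \<circ> D) q \<noteq> 0"
    using diffeo_non_parallel_pu_pv[OF D] non_parallel_nonzero dF_sphere_lift_injective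
    unfolding SD by blast+
  then have "vec_parallel (pu (S \<circ> D) q) (pu (S \<circ> D) q)"
    "vec_parallel (pv (S \<circ> D) q) (pv (S \<circ> D) q)"
    unfolding vec_parallel_def by (metis scaleR_one)+
  moreover have "parallel_to (pu (S \<circ> D) q) (plane_lift f n (D q))"
    "parallel_to (pv (S \<circ> D) q) (plane_lift f n (D q))"
    unfolding SD by (rule dF_sphere_lift_parallel)+
  moreover have "parallel_to (puv (S \<circ> D) q) (plane_lift f n (D q))"
    using forms puv_sphere_lift_parallel_iff[OF D2] by blast
  ultimately show ?thesis
    unfolding L_conj_net_def using diffeo_id by (intro exI[of _ id] exI[of _ q]) simp
qed

lemma L_conj_iff_exists_directions:
  "L_conj f n r p a b \<longleftrightarrow>
    (\<exists>\<alpha> \<beta>. non_parallel \<alpha> \<beta> \<and> conjugate f n p (dF f p \<alpha>) a \<and> conjugate f n p (dF f p \<beta>) b \<and>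
      second_fundamental_form f n p \<beta> \<alpha> = r p * third_fundamental_form n p \<beta> \<alpha>)"
proof
  assume "L_conj f n r p a b"
  then obtain D q where D: "diffeo D" "D q = p"
    and conj: "conjugate f n p (pu (f \<circ> D) q) a" "conjugate f n p (pv (f \<circ> D) q) b"
    and net: "L_conj_net (S \<circ> D) (plane_lift f n \<circ> D) q (pu (S \<circ> D) q) (pv (S \<circ> D) q)"
    unfolding L_conj_def by blast
  have D2: "twice_differentiable D"
    using D(1) by (rule diffeo_imp_twice_differentiable)
  have "pu (f \<circ> D) q = dF f p (pu D q)" "pv (f \<circ> D) q = dF f p (pv D q)"
    using pu_compose[OF twice_differentiable_f D2] pv_compose[OF twice_differentiable_f D2] D(2)
    by simp_all
  then show "\<exists>\<alpha> \<beta>. non_parallel \<alpha> \<beta> \<and> conjugate f n p (dF f p \<alpha>) a \<and> conjugate f n p (dF f p \<beta>) b \<and>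
      second_fundamental_form f n p \<beta> \<alpha> = r p * third_fundamental_form n p \<beta> \<alpha>"
    using diffeo_non_parallel_pu_pv[OF D(1)] conj L_conj_net_sphere_liftD[OF D(1) net] D(2)
    by (intro exI[of _ "pu D q"] exI[of _ "pv D q"]) simp
next
  assume "\<exists>\<alpha> \<beta>. non_parallel \<alpha> \<beta> \<and> conjugate f n p (dF f p \<alpha>) a \<and> conjugate f n p (dF f p \<beta>) b \<and>
      second_fundamental_form f n p \<beta> \<alpha> = r p * third_fundamental_form n p \<beta> \<alpha>"
  then obtain \<alpha> \<beta> where \<alpha>\<beta>: "non_parallel \<alpha> \<beta>"
    and conj: "conjugate f n p (dF f p \<alpha>) a" "conjugate f n p (dF f p \<beta>) b"
    and forms: "second_fundamental_form f n p \<beta> \<alpha> = r p * third_fundamental_form n p \<beta> \<alpha>"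
    by blast
  define D where "D z = p + lincomb \<alpha> \<beta> z" for z
  have D: "diffeo D"
    unfolding D_def[abs_def] by (rule diffeo_affine[OF \<alpha>\<beta>])
  then have D2: "twice_differentiable D"
    by (rule diffeo_imp_twice_differentiable)
  have D0: "D 0 = p"
    by (simp add: D_def lincomb_def)
  have columns: "pu D 0 = \<alpha>" "pv D 0 = \<beta>"
    unfolding pu_def pv_def D_def[abs_def] dF_affine[OF linear_lincomb] by simp_all
  have "pu (f \<circ> D) 0 = dF f p \<alpha>" "pv (f \<circ> D) 0 = dF f p \<beta>"
    using pu_compose[OF twice_differentiable_f D2] pv_compose[OF twice_differentiable_f D2] D0 columns
    by simp_all
  moreover have "L_conj_net (S \<circ> D) (plane_lift f n \<circ> D) 0 (pu (S \<circ> D) 0) (pv (S \<circ> D) 0)"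
    using forms by (intro L_conj_net_sphere_liftI[OF D]) (simp add: D0 columns)
  ultimately show "L_conj f n r p a b"
    unfolding L_conj_def using D D0 conj by (intro exI[of _ D] exI[of _ 0]) simp
qed

end

definition diag_form :: "real \<Rightarrow> real \<Rightarrow> real \<times> real \<Rightarrow> real \<times> real \<Rightarrow> real" where
  "diag_form c1 c2 u v = c1 * fst u * fst v + c2 * snd u * snd v"

definition diag_orthogonal :: "real \<Rightarrow> real \<Rightarrow> real \<times> real \<Rightarrow> real \<times> real" where
  "diag_orthogonal c1 c2 a = (c2 * snd a, - c1 * fst a)"

lemma diag_form_eq_0_iff:
  assumes "c1 \<noteq> 0" "c2 \<noteq> 0" "a \<noteq> 0"
  shows "diag_form c1 c2 u a = 0 \<longleftrightarrow> (\<exists>l. u = l *\<^sub>R diag_orthogonal c1 c2 a)"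
proof
  assume u: "diag_form c1 c2 u a = 0"
  show "\<exists>l. u = l *\<^sub>R diag_orthogonal c1 c2 a"
  proof (cases "fst a = 0")
    case True
    then have "snd a \<noteq> 0"
      using assms(3) by (simp add: prod_eq_iff)
    then show ?thesis
      using u True assms
      by (intro exI[of _ "fst u / (c2 * snd a)"]) (simp add: diag_form_def diag_orthogonal_def prod_eq_iff)
  next
    case False
    have "c1 * fst a * fst u = - (c2 * snd a * snd u)"
      using u by (simp add: diag_form_def algebra_simps eq_neg_iff_add_eq_0)
    then show ?thesis
      using False assms
      by (intro exI[of _ "- snd u / (c1 * fst a)"])
        (simp add: diag_orthogonal_def prod_eq_iff field_simps)
  qed
next
  assume "\<exists>l. u = l *\<^sub>R diag_orthogonal c1 c2 a"
  then show "diag_form c1 c2 u a = 0"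
    by (auto simp: diag_form_def diag_orthogonal_def algebra_simps)
qed

lemma diag_form_scaleR: "diag_form c1 c2 (x *\<^sub>R u) (y *\<^sub>R v) = x * y * diag_form c1 c2 u v"
  by (simp add: diag_form_def algebra_simps)

lemma linear_diag_orthogonal: "linear (diag_orthogonal c1 c2)"
  by (rule linearI) (auto simp: diag_orthogonal_def algebra_simps)

lemma inj_diag_orthogonal: "c1 \<noteq> 0 \<Longrightarrow> c2 \<noteq> 0 \<Longrightarrow> inj (diag_orthogonal c1 c2)"
  by (auto simp: linear_injective_0[OF linear_diag_orthogonal] diag_orthogonal_def prod_eq_iff)

lemma diag_form_diag_orthogonal:
  assumes "\<kappa>1 \<noteq> 0" "\<kappa>2 \<noteq> 0"
  shows "diag_form (\<kappa>1 - r * \<kappa>1\<^sup>2) (\<kappa>2 - r * \<kappa>2\<^sup>2)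
      (diag_orthogonal \<kappa>1 \<kappa>2 b) (diag_orthogonal \<kappa>1 \<kappa>2 a) =
    (\<kappa>1 * \<kappa>2)\<^sup>2 * diag_form (inverse \<kappa>2 - r) (inverse \<kappa>1 - r) a b"
  using assms by (simp add: diag_form_def diag_orthogonal_def field_simps power2_eq_square)

lemma exists_conjugate_directions_iff:
  fixes a b :: "real \<times> real"
  assumes \<kappa>: "\<kappa>1 \<noteq> 0" "\<kappa>2 \<noteq> 0" and ab: "non_parallel a b"
  shows "(\<exists>u v. non_parallel u v \<and> diag_form \<kappa>1 \<kappa>2 u a = 0 \<and> diag_form \<kappa>1 \<kappa>2 v b = 0 \<and>
        diag_form (\<kappa>1 - r * \<kappa>1\<^sup>2) (\<kappa>2 - r * \<kappa>2\<^sup>2) v u = 0) \<longleftrightarrow>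
    diag_form (inverse \<kappa>2 - r) (inverse \<kappa>1 - r) a b = 0"
  (is "(\<exists>u v. ?conj u v) \<longleftrightarrow> _")
proof
  assume "\<exists>u v. ?conj u v"
  then obtain u v where uv: "non_parallel u v" and conj: "diag_form \<kappa>1 \<kappa>2 u a = 0" "diag_form \<kappa>1 \<kappa>2 v b = 0"
    and L: "diag_form (\<kappa>1 - r * \<kappa>1\<^sup>2) (\<kappa>2 - r * \<kappa>2\<^sup>2) v u = 0"
    by blast
  obtain l m where u: "u = l *\<^sub>R diag_orthogonal \<kappa>1 \<kappa>2 a" and v: "v = m *\<^sub>R diag_orthogonal \<kappa>1 \<kappa>2 b"
    using conj diag_form_eq_0_iff \<kappa> non_parallel_nonzero[OF ab] by metis
  have "l \<noteq> 0" "m \<noteq> 0"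
    using non_parallel_nonzero[OF uv] u v by auto
  moreover have "m * l * (\<kappa>1 * \<kappa>2)\<^sup>2 * diag_form (inverse \<kappa>2 - r) (inverse \<kappa>1 - r) a b = 0"
    using L diag_form_diag_orthogonal[OF \<kappa>, of r b a]
    by (simp add: u v diag_form_scaleR)
  ultimately show "diag_form (inverse \<kappa>2 - r) (inverse \<kappa>1 - r) a b = 0"
    using \<kappa> by simp
next
  assume "diag_form (inverse \<kappa>2 - r) (inverse \<kappa>1 - r) a b = 0"
  then have "?conj (diag_orthogonal \<kappa>1 \<kappa>2 a) (diag_orthogonal \<kappa>1 \<kappa>2 b)"
    using ab diag_form_diag_orthogonal[OF \<kappa>, of r b a] diag_form_eq_0_iff[OF \<kappa>]
      non_parallel_linear_image_iff[OF linear_diag_orthogonal inj_diag_orthogonal[OF \<kappa>]]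
      non_parallel_nonzero[OF ab]
    by (metis mult_zero_right scaleR_one)
  then show "\<exists>u v. ?conj u v"
    by blast
qed

locale principal_frame = tangent_sphere_congruence +
  fixes p :: param and t1 t2 :: "real^3" and \<kappa>1 \<kappa>2 :: real
  assumes orthonormal: "t1 \<bullet> t1 = 1" "t2 \<bullet> t2 = 1" "t1 \<bullet> t2 = 0"
    and principal_t1: "principal_dir f n p t1 \<kappa>1"
    and principal_t2: "principal_dir f n p t2 \<kappa>2"
begin

lemma inj_lincomb_frame: "inj (lincomb t1 t2)"
  using non_parallel_orthonormal[OF orthonormal] linear_injective_0[OF linear_lincomb]
  unfolding non_parallel_iff_lincomb by blast

lemma principal_parametrization:
  obtains \<Phi> where "linear \<Phi>" "bij \<Phi>"
    "\<And>u. dF f p (\<Phi> u) = lincomb t1 t2 u"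
    "\<And>u v. second_fundamental_form f n p (\<Phi> u) (\<Phi> v) = diag_form \<kappa>1 \<kappa>2 u v"
    "\<And>u v. third_fundamental_form n p (\<Phi> u) (\<Phi> v) = diag_form (\<kappa>1\<^sup>2) (\<kappa>2\<^sup>2) u v"
proof -
  obtain \<xi>1 \<xi>2 where \<xi>1: "dF f p \<xi>1 = t1" "dF n p \<xi>1 = - \<kappa>1 *\<^sub>R t1"
    and \<xi>2: "dF f p \<xi>2 = t2" "dF n p \<xi>2 = - \<kappa>2 *\<^sub>R t2"
    using principal_t1 principal_t2 unfolding principal_dir_def by blast
  define \<Phi> where "\<Phi> = lincomb \<xi>1 \<xi>2"
  have df: "dF f p (\<Phi> u) = lincomb t1 t2 u" for u
    unfolding \<Phi>_def linear_lincomb_image[OF linear_dF(1)] \<xi>1 \<xi>2 ..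
  have dn: "dF n p (\<Phi> u) = - lincomb t1 t2 (\<kappa>1 * fst u, \<kappa>2 * snd u)" for u
    unfolding \<Phi>_def linear_lincomb_image[OF linear_dF(2)] \<xi>1 \<xi>2
    by (simp add: lincomb_def algebra_simps)
  have "non_parallel \<xi>1 \<xi>2"
    by (rule non_parallel_of_linear_image[OF linear_dF(1)[of p]])
      (simp add: \<xi>1 \<xi>2 non_parallel_orthonormal[OF orthonormal])
  then obtain M where "\<And>z. M (\<Phi> z) = z" "\<And>w. \<Phi> (M w) = w"
    using lincomb_linear_inverse unfolding \<Phi>_def by metis
  then have "bij \<Phi>"
    by (intro o_bij[of M]) auto
  show thesis
    by (rule that[OF linear_lincomb[of \<xi>1 \<xi>2, folded \<Phi>_def] \<open>bij \<Phi>\<close>])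
      (simp_all add: second_fundamental_form_def third_fundamental_form_def df dn
        lincomb_inner_orthonormal[OF orthonormal] diag_form_def power2_eq_square algebra_simps)
qed

lemma conjugate_principal_iff:
  "conjugate f n p (lincomb t1 t2 u) (lincomb t1 t2 v) \<longleftrightarrow> diag_form \<kappa>1 \<kappa>2 u v = 0"
proof -
  obtain \<Phi> where \<Phi>: "linear \<Phi>" "bij \<Phi>" "\<And>u. dF f p (\<Phi> u) = lincomb t1 t2 u"
    "\<And>u v. second_fundamental_form f n p (\<Phi> u) (\<Phi> v) = diag_form \<kappa>1 \<kappa>2 u v"
    "\<And>u v. third_fundamental_form n p (\<Phi> u) (\<Phi> v) = diag_form (\<kappa>1\<^sup>2) (\<kappa>2\<^sup>2) u v"
    using principal_parametrization by blast
  have surj: "\<exists>u. \<xi> = \<Phi> u" for \<xi>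
    using bij_is_surj[OF \<Phi>(2)] unfolding surj_def by blast
  have "conjugate f n p (lincomb t1 t2 u) (lincomb t1 t2 v) \<longleftrightarrow>
      (\<exists>\<xi> \<eta>. lincomb t1 t2 u = dF f p \<xi> \<and> lincomb t1 t2 v = dF f p \<eta> \<and>
        second_fundamental_form f n p \<xi> \<eta> = 0)"
    unfolding conjugate_def second_fundamental_form_def ..
  also have "\<dots> \<longleftrightarrow> (\<exists>u' v'. lincomb t1 t2 u = dF f p (\<Phi> u') \<and>
        lincomb t1 t2 v = dF f p (\<Phi> v') \<and> second_fundamental_form f n p (\<Phi> u') (\<Phi> v') = 0)"
    by (metis surj)
  also have "\<dots> \<longleftrightarrow> diag_form \<kappa>1 \<kappa>2 u v = 0"
    using inj_lincomb_frame by (simp add: \<Phi>(3,4) inj_eq)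
  finally show ?thesis .
qed

lemma L_conj_iff_exists_conjugate_directions:
  "L_conj f n r p (lincomb t1 t2 a) (lincomb t1 t2 b) \<longleftrightarrow>
    (\<exists>u v. non_parallel u v \<and> diag_form \<kappa>1 \<kappa>2 u a = 0 \<and> diag_form \<kappa>1 \<kappa>2 v b = 0 \<and>
      diag_form (\<kappa>1 - r p * \<kappa>1\<^sup>2) (\<kappa>2 - r p * \<kappa>2\<^sup>2) v u = 0)"
proof -
  obtain \<Phi> where \<Phi>: "linear \<Phi>" "bij \<Phi>" "\<And>u. dF f p (\<Phi> u) = lincomb t1 t2 u"
    "\<And>u v. second_fundamental_form f n p (\<Phi> u) (\<Phi> v) = diag_form \<kappa>1 \<kappa>2 u v"
    "\<And>u v. third_fundamental_form n p (\<Phi> u) (\<Phi> v) = diag_form (\<kappa>1\<^sup>2) (\<kappa>2\<^sup>2) u v"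
    using principal_parametrization by blast
  have surj: "\<exists>u. \<xi> = \<Phi> u" for \<xi>
    using bij_is_surj[OF \<Phi>(2)] unfolding surj_def by blast
  have forms: "second_fundamental_form f n p (\<Phi> v) (\<Phi> u) = r p * third_fundamental_form n p (\<Phi> v) (\<Phi> u)
      \<longleftrightarrow> diag_form (\<kappa>1 - r p * \<kappa>1\<^sup>2) (\<kappa>2 - r p * \<kappa>2\<^sup>2) v u = 0" for u v
    by (simp add: \<Phi>(4,5) diag_form_def algebra_simps)
  have "L_conj f n r p (lincomb t1 t2 a) (lincomb t1 t2 b) \<longleftrightarrow>
      (\<exists>u v. non_parallel (\<Phi> u) (\<Phi> v) \<and> conjugate f n p (dF f p (\<Phi> u)) (lincomb t1 t2 a) \<and>
        conjugate f n p (dF f p (\<Phi> v)) (lincomb t1 t2 b) \<and>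
        second_fundamental_form f n p (\<Phi> v) (\<Phi> u) = r p * third_fundamental_form n p (\<Phi> v) (\<Phi> u))"
    unfolding L_conj_iff_exists_directions by (metis surj)
  also have "\<dots> \<longleftrightarrow> (\<exists>u v. non_parallel u v \<and> diag_form \<kappa>1 \<kappa>2 u a = 0 \<and> diag_form \<kappa>1 \<kappa>2 v b = 0 \<and>
      diag_form (\<kappa>1 - r p * \<kappa>1\<^sup>2) (\<kappa>2 - r p * \<kappa>2\<^sup>2) v u = 0)"
    unfolding forms non_parallel_linear_image_iff[OF \<Phi>(1) bij_is_inj[OF \<Phi>(2)]] \<Phi>(3)
      conjugate_principal_iff ..
  finally show ?thesis .
qed

end

theorem theorem2:
  fixes f n :: "real \<times> real \<Rightarrow> real^3" and r :: "real \<times> real \<Rightarrow> real"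
    and p :: "real \<times> real" and t1 t2 :: "real^3" and \<kappa>1 \<kappa>2 a1 a2 b1 b2 :: real
  assumes f_smooth: "smooth f" and f_regular: "regular_net f"
    and n_smooth: "smooth n" and n_normal: "unit_normal_field f n"
    and no_umbilic: "\<forall>q. \<not> umbilic f n q" and no_parabolic: "\<forall>q. \<not> parabolic f n q"
    and S_smooth: "smooth (sphere_lift f n r)" and S_regular: "regular_net (sphere_lift f n r)"
    and frame: "norm t1 = 1" "norm t2 = 1" "t1 \<bullet> t2 = 0" "t1 \<bullet> n p = 0" "t2 \<bullet> n p = 0"
    and principal: "principal_dir f n p t1 \<kappa>1" "principal_dir f n p t2 \<kappa>2"
    and kappa: "\<kappa>1 \<noteq> \<kappa>2" "\<kappa>1 \<noteq> 0" "\<kappa>2 \<noteq> 0"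
    and nonpar: "non_parallel (a1 *\<^sub>R t1 + a2 *\<^sub>R t2) (b1 *\<^sub>R t1 + b2 *\<^sub>R t2)"
  shows "L_conj f n r p (a1 *\<^sub>R t1 + a2 *\<^sub>R t2) (b1 *\<^sub>R t1 + b2 *\<^sub>R t2) \<longleftrightarrow>
         (inverse \<kappa>2 - r p) * a1 * b1 + (inverse \<kappa>1 - r p) * a2 * b2 = 0"
proof -
  interpret principal_frame f n r p t1 t2 \<kappa>1 \<kappa>2
    by unfold_locales
      (simp_all add: f_smooth n_smooth n_normal S_smooth S_regular principal frame(3)
        frame(1,2)[unfolded norm_eq_1])
  have ab: "a1 *\<^sub>R t1 + a2 *\<^sub>R t2 = lincomb t1 t2 (a1, a2)" "b1 *\<^sub>R t1 + b2 *\<^sub>R t2 = lincomb t1 t2 (b1, b2)"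
    by (simp_all add: lincomb_def)
  have "non_parallel (a1, a2) (b1, b2)"
    using nonpar non_parallel_of_linear_image[OF linear_lincomb] unfolding ab by blast
  then have "L_conj f n r p (lincomb t1 t2 (a1, a2)) (lincomb t1 t2 (b1, b2)) \<longleftrightarrow>
      diag_form (inverse \<kappa>2 - r p) (inverse \<kappa>1 - r p) (a1, a2) (b1, b2) = 0"
    unfolding L_conj_iff_exists_conjugate_directions
    by (rule exists_conjugate_directions_iff[OF kappa(2,3)])
  then show ?thesis
    unfolding ab by (simp add: diag_form_def)
qed

end
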